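(* Consider any one of the following games on $n$ cups: the fixed $p$-processor cup game (for some fixed $p$) or the variable-processor cup game, each in either the non-negative-fill version or the negative-fill version. Then for every state $A$ and every game length $t\ge 0$, $\operatorname{GREEDY}(A,t)=\operatorname{OPT}(A,t)$.
   Context: A state is a multiset of $n$ real fills (states equal up to permutation are identified). In the variable-processor cup game, in each round the filler chooses an integer $1\le p\le n$ and reals $a_1,\dots,a_n\in[0,1]$ with $\sum_i a_i=p$ and adds $a_i$ to cup $i$; then the emptier chooses exactly $p$ distinct cups and removes $1$ unit from each: in the non-negative-fill version a chosen cup with fill $x$ becomes $\max(0,x-1)$, in the negative-fill version it becomes $x-1$. The fixed $p$-processor cup game is the same except that $p$ is the same fixed value in every round. The backlog of a state is its maximum fill. $\operatorname{OPT}(S,0)$ is the backlog of $S$, and for $t>0$, $\operatorname{OPT}(S,t)=\sup_{S'}\min_{S''}\operatorname{OPT}(S'',t-1)$, where $S'$ ranges over states reachable from $S$ by a filler move and $S''$ over states reachable from $S'$ by an emptier move. $\operatorname{GREEDY}(S,t)$ is the supremum backlog a filler can achieve at the end of a $t$-round game starting from $S$ when the emptier is greedy, i.e. always empties from the $p$ fullest cups after the filler's move. *)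

theory Defs
  imports Complex_Main "HOL-Library.Multiset"
begin

datatype proc_mode = Fixed nat | Variable

datatype fill_mode = NonNeg | Neg

type_synonym state = "real multiset"

definition backlog :: "state \<Rightarrow> real" where
  "backlog S = Max (set_mset S)"

fun procs :: "proc_mode \<Rightarrow> nat \<Rightarrow> nat set" where
  "procs (Fixed p) n = {p}"
| "procs Variable n = {1..n}"

fun dec :: "fill_mode \<Rightarrow> real \<Rightarrow> real" where
  "dec NonNeg x = max 0 (x - 1)"
| "dec Neg x = x - 1"

text \<open>Filler moves: pairs (resulting state, chosen number of processors p).\<close>
definition filler_moves :: "proc_mode \<Rightarrow> state \<Rightarrow> (state \<times> nat) set" where
  "filler_moves pm S =
     {(mset (map2 (+) xs as), p) | xs as p.
        mset xs = S \<and> length as = length xs \<and> (\<forall>a\<in>set as. 0 \<le> a \<and> a \<le> 1) \<and>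
        sum_list as = real p \<and> p \<in> procs pm (size S)}"

definition emptier_moves :: "fill_mode \<Rightarrow> state \<Rightarrow> nat \<Rightarrow> state set" where
  "emptier_moves fm S p =
     {mset (map (\<lambda>i. if i \<in> I then dec fm (xs ! i) else xs ! i) [0..<length xs]) | xs I.
        mset xs = S \<and> I \<subseteq> {..<length xs} \<and> card I = p}"

definition greedy_empty :: "fill_mode \<Rightarrow> state \<Rightarrow> nat \<Rightarrow> state" where
  "greedy_empty fm S p =
     (let xs = rev (sorted_list_of_multiset S) in mset (map (dec fm) (take p xs) @ drop p xs))"

fun OPT :: "proc_mode \<Rightarrow> fill_mode \<Rightarrow> state \<Rightarrow> nat \<Rightarrow> real" where
  "OPT pm fm S 0 = backlog S"
| "OPT pm fm S (Suc t) =
     (SUP m \<in> filler_moves pm S. INF S'' \<in> emptier_moves fm (fst m) (snd m). OPT pm fm S'' t)"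

fun GREEDY :: "proc_mode \<Rightarrow> fill_mode \<Rightarrow> state \<Rightarrow> nat \<Rightarrow> real" where
  "GREEDY pm fm S 0 = backlog S"
| "GREEDY pm fm S (Suc t) =
     (SUP m \<in> filler_moves pm S. GREEDY pm fm (greedy_empty fm (fst m) (snd m)) t)"

end

theory Submission
  imports Defs "HOL-Combinatorics.Permutations"
begin

(* Write dominated fm S T if T arises from S by raising cups and by shifts, which move one unit
   of fill from a cup j onto a cup i that is at least as full as cup j after emptying it.  This
   preorder is compatible with both players: every filler move from S is matched by a filler move
   from T that leads to a dominating state, and every emptier move from T is matched by an emptier
   move from S that leads to a dominated state.  By induction on the number of rounds, OPT is
   monotone for it.  Emptying the p fullest cups is dominated by every other emptier move, because
   emptying a less full cup instead of a fuller one is a shift (or, when clipping at 0 intervenes,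
   a swap followed by raises).  So the infimum in OPT is attained by the greedy answer, and
   GREEDY = OPT follows by induction on the number of rounds. *)

lemma permute_list_list_update:
  assumes p: "p permutes {..<length xs}" and i: "i < length xs"
  shows "permute_list p (xs[i := v]) = (permute_list p xs)[inv p i := v]"
proof (rule nth_equalityI)
  fix k assume "k < length (permute_list p (xs[i := v]))"
  then have k: "k < length xs" by simp
  have pk: "p k < length xs" using permutes_in_image[OF p] k by simp
  show "permute_list p (xs[i := v]) ! k = (permute_list p xs)[inv p i := v] ! k"
  proof (cases "k = inv p i")
    case True
    then show ?thesis using p i k by (simp add: permute_list_nth permutes_inverses(1))
  next
    case False
    then have "p k \<noteq> i" using p by (metis permutes_inverses(2))
    then show ?thesis using False p k pk by (simp add: permute_list_nth)
  qed
qed simp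

lemma sum_list_list_update:
  fixes xs :: "'a::ab_group_add list"
  shows "k < length xs \<Longrightarrow> sum_list (xs[k := x]) = sum_list xs + x - xs ! k"
  by (induction xs arbitrary: k) (auto split: nat.split)

lemma dec_mono: "x \<le> y \<Longrightarrow> dec fm x \<le> dec fm y"
  by (cases fm) auto

lemma dec_ge: "x - 1 \<le> dec fm x"
  by (cases fm) auto

lemma dec_le_max: "dec fm x \<le> max 0 x"
  by (cases fm) auto

lemma dec_add_le: "0 \<le> y \<Longrightarrow> dec fm (x + y) \<le> dec fm x + y"
  by (cases fm) auto

lemma dec_dec_le: "dec fm (dec fm x) \<le> dec fm x"
  by (cases fm) auto

lemma le_dec_plus_1: "x \<le> dec fm (x + 1)"
  by (cases fm) auto

lemma dec_plus_1_le: "dec fm x + 1 \<le> x \<or> (fm = NonNeg \<and> dec fm x = 0)"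
  by (cases fm) auto

lemma dec_plus_1_le_dec: "dec fm x + 1 \<le> dec fm (x + 1) \<or> (fm = NonNeg \<and> dec fm x = 0)"
  by (cases fm) auto

section \<open>Moves of the two players\<close>

lemma procs_nonempty: "1 \<le> n \<Longrightarrow> procs pm n \<noteq> {}"
  by (cases pm) auto

lemma filler_movesI:
  "mset xs = X \<Longrightarrow> length as = length xs \<Longrightarrow> set as \<subseteq> {0..1} \<Longrightarrow>
    sum_list as = real p \<Longrightarrow> p \<in> procs pm (size X) \<Longrightarrow>
    (mset (map2 (+) xs as), p) \<in> filler_moves pm X"
  unfolding filler_moves_def by fastforce

lemma filler_movesE:
  assumes "(Z, p) \<in> filler_moves pm X"
  obtains xs as where "mset xs = X" "Z = mset (map2 (+) xs as)" "length as = length xs"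
    "set as \<subseteq> {0..1}" "sum_list as = real p" "p \<in> procs pm (size X)"
  using assms unfolding filler_moves_def by fastforce

lemma filler_moves_size:
  assumes "(Z, p) \<in> filler_moves pm X"
  shows "size Z = size X" "p \<in> procs pm (size X)"
  using assms by (auto elim!: filler_movesE)

lemma filler_moves_backlog:
  assumes "(Z, p) \<in> filler_moves pm X" "X \<noteq> {#}"
  shows "backlog Z \<le> backlog X + 1"
proof -
  obtain xs as where fill: "mset xs = X" "Z = mset (map2 (+) xs as)" "length as = length xs"
    "set as \<subseteq> {0..1}"
    using assms(1) by (rule filler_movesE)
  have "z \<le> Max (set xs) + 1" if z: "z \<in> set (map2 (+) xs as)" for z
  proof -
    obtain k where k: "k < length xs" "z = xs ! k + as ! k"
      using z fill(3) by (auto simp: in_set_conv_nth)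
    have "as ! k \<le> 1" using fill(3,4) k(1) by (metis atLeastAtMost_iff nth_mem subsetD)
    then show ?thesis using k by (simp add: add_mono)
  qed
  moreover have "set (map2 (+) xs as) \<noteq> {}"
    using assms(2) fill(1,3)
    by (metis length_map length_zip min.idem length_0_conv mset.simps(1) set_empty)
  ultimately show ?thesis
    unfolding backlog_def fill(2) fill(1)[symmetric] set_mset_mset
    by (intro Max.boundedI finite_set) blast+
qed

lemma filler_moves_nonempty:
  assumes "p \<in> procs pm (size X)" "p \<le> size X"
  shows "\<exists>Z. (Z, p) \<in> filler_moves pm X"
proof -
  obtain xs where xs: "mset xs = X" using ex_mset by blast
  let ?as = "replicate p 1 @ replicate (size X - p) (0::real)"
  have "(mset (map2 (+) xs ?as), p) \<in> filler_moves pm X"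
    using assms xs by (intro filler_movesI) (auto simp: sum_list_replicate)
  then show ?thesis by blast
qed

definition empty_cups :: "fill_mode \<Rightarrow> real list \<Rightarrow> nat set \<Rightarrow> real list" where
  "empty_cups fm xs I = map (\<lambda>i. if i \<in> I then dec fm (xs ! i) else xs ! i) [0..<length xs]"

lemma length_empty_cups [simp]: "length (empty_cups fm xs I) = length xs"
  by (simp add: empty_cups_def)

lemma nth_empty_cups:
  "i < length xs \<Longrightarrow> empty_cups fm xs I ! i = (if i \<in> I then dec fm (xs ! i) else xs ! i)"
  by (simp add: empty_cups_def)

lemma empty_cups_list_update:
  "i < length xs \<Longrightarrow>
     empty_cups fm (xs[i := v]) I = (empty_cups fm xs I)[i := (if i \<in> I then dec fm v else v)]"
  by (rule nth_equalityI) (auto simp: nth_empty_cups nth_list_update)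

lemma empty_cups_permute_list:
  assumes "p permutes {..<length xs}"
  shows "empty_cups fm (permute_list p xs) I = permute_list p (empty_cups fm xs (p ` I))"
  using assms permutes_in_image[OF assms]
  by (intro nth_equalityI)
     (auto simp: permute_list_nth nth_empty_cups inj_image_mem_iff[OF permutes_inj[OF assms]])

lemma emptier_moves_mset:
  "emptier_moves fm (mset xs) p =
     {mset (empty_cups fm xs I) | I. I \<subseteq> {..<length xs} \<and> card I = p}"
proof (intro set_eqI iffI)
  fix Q assume "Q \<in> emptier_moves fm (mset xs) p"
  then obtain ys I where ys: "mset ys = mset xs" "I \<subseteq> {..<length ys}" "card I = p"
    and Q: "Q = mset (empty_cups fm ys I)"
    unfolding emptier_moves_def empty_cups_def by blast
  obtain q where q: "q permutes {..<length xs}" "permute_list q xs = ys"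
    using mset_eq_permutation[OF ys(1)] by blast
  have "Q = mset (empty_cups fm xs (q ` I))"
    using Q q by (auto simp: empty_cups_permute_list)
  moreover have "q ` I \<subseteq> {..<length xs}" "card (q ` I) = p"
    using ys q permutes_in_image[OF q(1)] card_image[OF inj_on_subset[OF permutes_inj[OF q(1)]]]
    by auto
  ultimately show "Q \<in> {mset (empty_cups fm xs I) | I. I \<subseteq> {..<length xs} \<and> card I = p}"
    by blast
qed (auto simp: emptier_moves_def empty_cups_def)

lemma emptier_moves_finite: "finite (emptier_moves fm Z p)"
proof -
  obtain xs where xs: "mset xs = Z" using ex_mset by blast
  have "emptier_moves fm Z p \<subseteq> (\<lambda>I. mset (empty_cups fm xs I)) ` Pow {..<length xs}"
    unfolding xs[symmetric] emptier_moves_mset by blast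
  then show ?thesis by (rule finite_surj[rotated]) simp
qed

lemma emptier_moves_size: "Q \<in> emptier_moves fm Z p \<Longrightarrow> size Q = size Z"
  by (auto simp: emptier_moves_def empty_cups_def)

lemma emptier_moves_nonempty: "p \<le> size Z \<Longrightarrow> emptier_moves fm Z p \<noteq> {}"
proof -
  assume p: "p \<le> size Z"
  obtain xs where xs: "mset xs = Z" using ex_mset by blast
  have "mset (empty_cups fm xs {..<p}) \<in> emptier_moves fm Z p"
    unfolding xs[symmetric] emptier_moves_mset using p xs by auto
  then show ?thesis by blast
qed

lemma emptier_moves_backlog:
  assumes "Q \<in> emptier_moves fm Z p" "Z \<noteq> {#}"
  shows "backlog Q \<le> max 0 (backlog Z)"
proof -
  obtain xs where xs: "mset xs = Z" using ex_mset by blast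
  obtain I where Q: "Q = mset (empty_cups fm xs I)"
    using assms(1) unfolding xs[symmetric] emptier_moves_mset by auto
  have "z \<le> max 0 (Max (set xs))" if z: "z \<in> set (empty_cups fm xs I)" for z
  proof -
    obtain k where k: "k < length xs" "z = empty_cups fm xs I ! k"
      using z by (auto simp: in_set_conv_nth)
    then have "z \<le> max 0 (xs ! k)"
      using dec_le_max[of fm "xs ! k"] by (auto simp: nth_empty_cups)
    moreover have "xs ! k \<le> Max (set xs)" using k(1) by simp
    ultimately show ?thesis by linarith
  qed
  moreover have "set (empty_cups fm xs I) \<noteq> {}"
    using assms(2) xs by (metis length_empty_cups length_0_conv mset.simps(1) set_empty)
  ultimately show ?thesis
    unfolding backlog_def Q xs[symmetric] set_mset_mset by (intro Max.boundedI finite_set) blast+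
qed

lemma greedy_empty_empty_cups:
  assumes "p \<le> size S"
  shows "greedy_empty fm S p = mset (empty_cups fm (rev (sorted_list_of_multiset S)) {..<p})"
proof -
  let ?xs = "rev (sorted_list_of_multiset S)"
  have "length ?xs = size S"
    by (metis length_rev mset_sorted_list_of_multiset size_mset)
  then have "map (dec fm) (take p ?xs) @ drop p ?xs = empty_cups fm ?xs {..<p}"
    using assms by (intro nth_equalityI) (auto simp: nth_append nth_empty_cups)
  then show ?thesis
    unfolding greedy_empty_def Let_def by simp
qed

section \<open>Domination of states\<close>

inductive cup_step :: "fill_mode \<Rightarrow> real list \<Rightarrow> real list \<Rightarrow> bool" for fm where
  raise: "i < length xs \<Longrightarrow> xs ! i \<le> v \<Longrightarrow> cup_step fm xs (xs[i := v])"
| shift: "i < length xs \<Longrightarrow> j < length xs \<Longrightarrow> i \<noteq> j \<Longrightarrow> xs ! i = a \<Longrightarrow> xs ! j = c \<Longrightarrow>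
    dec fm c \<le> a \<Longrightarrow> cup_step fm xs (xs[i := a + 1, j := dec fm c])"

lemma cup_step_length: "cup_step fm xs ys \<Longrightarrow> length ys = length xs"
  by (induction rule: cup_step.induct) auto

lemma cup_step_permute_list:
  assumes "cup_step fm xs ys" and p: "p permutes {..<length xs}"
  shows "cup_step fm (permute_list p xs) (permute_list p ys)"
  using assms(1)
proof cases
  case (raise i v)
  have "inv p i < length xs" "p (inv p i) = i"
    using raise(2) permutes_in_image[OF permutes_inv[OF p]] permutes_inverses(1)[OF p] by auto
  then show ?thesis
    using raise p by (simp add: permute_list_list_update permute_list_nth cup_step.raise)
next
  case (shift i j a c)
  have "inv p i < length xs" "p (inv p i) = i" "inv p j < length xs" "p (inv p j) = j"
    using shift(2,3) permutes_in_image[OF permutes_inv[OF p]] permutes_inverses(1)[OF p] by auto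
  moreover have "inv p i \<noteq> inv p j"
    using shift(4) permutes_inj[OF permutes_inv[OF p]] by (metis injD)
  ultimately show ?thesis
    using shift p by (auto simp: permute_list_list_update permute_list_nth intro!: cup_step.shift)
qed

definition dominated_step :: "fill_mode \<Rightarrow> state \<Rightarrow> state \<Rightarrow> bool" where
  "dominated_step fm S T \<longleftrightarrow> (\<exists>xs ys. S = mset xs \<and> T = mset ys \<and> cup_step fm xs ys)"

abbreviation dominated :: "fill_mode \<Rightarrow> state \<Rightarrow> state \<Rightarrow> bool" where
  "dominated fm \<equiv> (dominated_step fm)\<^sup>*\<^sup>*"

lemma dominated_step_mset:
  assumes "dominated_step fm (mset xs) T"
  obtains ys where "T = mset ys" "cup_step fm xs ys"
proof -
  obtain zs ws where zs: "mset xs = mset zs" "T = mset ws" "cup_step fm zs ws"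
    using assms unfolding dominated_step_def by blast
  obtain p where p: "p permutes {..<length zs}" "permute_list p zs = xs"
    using mset_eq_permutation[OF zs(1)] by blast
  have "cup_step fm xs (permute_list p ws)"
    using cup_step_permute_list[OF zs(3) p(1)] p(2) by simp
  moreover have "mset (permute_list p ws) = T"
    using p(1) zs(2) cup_step_length[OF zs(3)] by simp
  ultimately show thesis using that by blast
qed

lemma cup_step_dominated: "cup_step fm xs ys \<Longrightarrow> dominated fm (mset xs) (mset ys)"
  unfolding dominated_step_def by blast

lemma dominated_size: "dominated fm S T \<Longrightarrow> size T = size S"
proof (induction rule: rtranclp_induct)
  case (step T U)
  then show ?case
    by (metis dominated_step_def cup_step_length size_mset)
qed simp

lemma dominated_pointwise_le:
  assumes "length ys = length xs" "\<And>k. k < length xs \<Longrightarrow> xs ! k \<le> ys ! k"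
  shows "dominated fm (mset xs) (mset ys)"
proof -
  have "dominated fm (mset xs) (mset (take k ys @ drop k xs))" if "k \<le> length xs" for k
    using that
  proof (induction k)
    case (Suc k)
    have "take (Suc k) ys @ drop (Suc k) xs = (take k ys @ drop k xs)[k := ys ! k]"
      using Suc.prems assms(1)
      by (intro nth_equalityI) (auto simp: nth_append nth_list_update min_def)
    moreover have "cup_step fm (take k ys @ drop k xs) ((take k ys @ drop k xs)[k := ys ! k])"
      using Suc.prems assms by (intro cup_step.raise) (auto simp: nth_append min_def)
    ultimately show ?case
      using Suc by (metis Suc_leD cup_step_dominated rtranclp_trans)
  qed simp
  from this[of "length xs"] show ?thesis using assms(1) by simp
qed

lemma dominated_unit_transfer:
  assumes ij: "i < length xs" "j < length xs" "i \<noteq> j"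
    and "dec fm (xs ! j) \<le> xs ! i" "dec fm (xs ! j) \<le> w" "xs ! j \<le> u"
    and "xs ! i + 1 \<le> u \<or> (fm = NonNeg \<and> xs ! i = 0)"
  shows "dominated fm (mset xs) (mset (xs[i := u, j := w]))"
  using assms(7)
proof
  assume "xs ! i + 1 \<le> u"
  let ?ys = "xs[i := xs ! i + 1, j := dec fm (xs ! j)]"
  have "dominated fm (mset xs) (mset ?ys)"
    using assms by (intro cup_step_dominated cup_step.shift) auto
  moreover have "dominated fm (mset ?ys) (mset (xs[i := u, j := w]))"
    using assms \<open>xs ! i + 1 \<le> u\<close>
    by (intro dominated_pointwise_le) (auto simp: nth_list_update)
  ultimately show ?thesis by (rule rtranclp_trans)
next
  assume NonNeg: "fm = NonNeg \<and> xs ! i = 0"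
  \<comment> \<open>Cup i is empty in the non-negative version: swapping the two cups replaces the shift.\<close>
  have "mset xs = mset (xs[j := xs ! i, i := xs ! j])"
    using ij by (simp add: mset_swap)
  also have "dominated fm \<dots> (mset (xs[i := u, j := w]))"
    using assms NonNeg by (intro dominated_pointwise_le) (auto simp: nth_list_update)
  finally show ?thesis .
qed

lemma cup_step_le_some:
  assumes "cup_step fm xs ys" "x \<in> set xs"
  shows "\<exists>y\<in>set ys. x \<le> y"
proof -
  obtain k where k: "k < length xs" "x = xs ! k"
    using assms(2) by (auto simp: in_set_conv_nth)
  from assms(1) show ?thesis
  proof cases
    case (raise i v)
    then show ?thesis
      using k by (cases "k = i") (force simp: nth_list_update in_set_conv_nth)+
  next
    case (shift i j a c)
    have "c \<le> a + 1" using dec_ge[of c fm] shift by linarith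
    then have "x \<le> ys ! i \<or> x = ys ! k"
      using k shift by (auto simp: nth_list_update)
    then show ?thesis
      using k shift by (metis length_list_update nth_mem order_refl)
  qed
qed

lemma dominated_backlog: "dominated fm S T \<Longrightarrow> backlog S \<le> backlog T"
proof (induction rule: rtranclp_induct)
  case (step T U)
  obtain xs ys where xs: "T = mset xs" "U = mset ys" "cup_step fm xs ys"
    using step.hyps(2) unfolding dominated_step_def by blast
  have "backlog T \<le> backlog U"
  proof (cases "xs = []")
    case False
    then have "ys \<noteq> []" using cup_step_length[OF xs(3)] by auto
    then show ?thesis
      unfolding backlog_def xs(1,2) using cup_step_le_some[OF xs(3)] False
      by (intro Max.boundedI) (auto intro: order_trans[OF _ Max_ge])
  qed (use xs cup_step_length[OF xs(3)] in auto)
  then show ?case using step.IH by linarith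
qed simp

lemma shift_after_fill_dominated:
  assumes ij: "i < length xs" "j < length xs" "i \<noteq> j" "xs ! i = a" "xs ! j = c" "dec fm c \<le> a"
    and as: "length as = length xs" "0 \<le> as ! i" "0 \<le> as ! j"
    and le: "c + as ! j \<le> a + as ! i + 1"
  shows "dominated fm (mset (map2 (+) xs as)) (mset (map2 (+) (xs[i := a + 1, j := dec fm c]) as))"
proof -
  let ?zs = "map2 (+) xs as"
  have "map2 (+) (xs[i := a + 1, j := dec fm c]) as = ?zs[i := (a + as ! i) + 1, j := dec fm c + as ! j]"
    using ij as by (intro nth_equalityI) (auto simp: nth_list_update)
  moreover have "dec fm (c + as ! j) \<le> a + as ! i"
  proof (cases fm)
    case NonNeg
    then have "0 \<le> a" using ij(6) by simp
    then show ?thesis using NonNeg le as by simp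
  qed (use le in simp)
  then have "dominated fm (mset ?zs) (mset (?zs[i := (a + as ! i) + 1, j := dec fm c + as ! j]))"
    using ij as le dec_add_le[OF as(3), of fm c] by (intro dominated_unit_transfer) auto
  ultimately show ?thesis by simp
qed

lemma shift_after_fill_resplit_dominated:
  assumes ij: "i < length xs" "j < length xs" "i \<noteq> j" "xs ! i = a" "xs ! j = c"
    and as: "length as = length xs"
  defines "\<beta> \<equiv> c + as ! j - a - 1"
  shows "dominated fm (mset (map2 (+) xs as))
           (mset (map2 (+) (xs[i := a + 1, j := dec fm c])
                           (as[i := \<beta>, j := as ! i + as ! j - \<beta>])))"
proof -
  let ?zs = "map2 (+) xs as"
  have "mset ?zs = mset (?zs[j := ?zs ! i, i := ?zs ! j])"
    using ij(1,2) as by (simp only: mset_swap length_map length_zip min.idem)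
  also have "dominated fm \<dots> (mset (map2 (+) (xs[i := a + 1, j := dec fm c])
                                   (as[i := \<beta>, j := as ! i + as ! j - \<beta>])))"
    using ij as dec_ge[of c fm]
    by (intro dominated_pointwise_le) (auto simp: nth_list_update \<beta>_def)
  finally show ?thesis .
qed

lemma cup_step_fill:
  assumes step: "cup_step fm xs ys" and as: "length as = length xs" "set as \<subseteq> {0..1}"
  obtains bs where "length bs = length ys" "set bs \<subseteq> {0..1}" "sum_list bs = sum_list as"
    "dominated fm (mset (map2 (+) xs as)) (mset (map2 (+) ys bs))"
proof -
  have as_bounds: "0 \<le> as ! k" "as ! k \<le> 1" if "k < length xs" for k
    using as that by (metis atLeastAtMost_iff nth_mem subsetD)+
  from step show thesis
  proof cases
    case (raise i v)
    then have "dominated fm (mset (map2 (+) xs as)) (mset (map2 (+) ys as))"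
      using as(1) by (intro dominated_pointwise_le) (auto simp: nth_list_update)
    then show thesis using that[of as] raise as by simp
  next
    case (shift i j a c)
    show thesis
    proof (cases "c + as ! j \<le> a + as ! i + 1")
      case True
      then show thesis
        using that[of as] shift as as_bounds shift_after_fill_dominated[of i xs j a c fm as] by simp
    next
      case False
      \<comment> \<open>Cup j would end above cup i: re-split the fill of the two cups so that they trade places.\<close>
      define \<beta> where "\<beta> = c + as ! j - a - 1"
      define bs where "bs = as[i := \<beta>, j := as ! i + as ! j - \<beta>]"
      have "c \<le> a + 1" using dec_ge[of c fm] shift by linarith
      then have "0 \<le> \<beta>" "\<beta> \<le> 1" "0 \<le> as ! i + as ! j - \<beta>" "as ! i + as ! j - \<beta> \<le> 1"
        using False as_bounds[OF shift(2)] as_bounds[OF shift(3)] by (auto simp: \<beta>_def)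
      moreover have "set bs \<subseteq> insert (as ! i + as ! j - \<beta>) (insert \<beta> (set as))"
        unfolding bs_def by (meson set_update_subset_insert subset_trans insert_mono)
      ultimately have "set bs \<subseteq> {0..1}"
        using as(2) by auto
      moreover have "sum_list bs = sum_list as"
        using shift as(1) by (simp add: bs_def sum_list_list_update nth_list_update)
      ultimately show thesis
        using that[of bs] shift as(1) shift_after_fill_resplit_dominated[of i xs j a c as fm]
        by (simp add: bs_def \<beta>_def)
    qed
  qed
qed

lemma filler_moves_dominated_step:
  assumes "dominated_step fm X Y" "(Z, p) \<in> filler_moves pm X"
  shows "\<exists>Z'. (Z', p) \<in> filler_moves pm Y \<and> dominated fm Z Z'"
proof -
  obtain xs as where fill: "mset xs = X" "Z = mset (map2 (+) xs as)" "length as = length xs"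
    "set as \<subseteq> {0..1}" "sum_list as = real p" "p \<in> procs pm (size X)"
    using assms(2) by (rule filler_movesE)
  obtain ys where ys: "Y = mset ys" "cup_step fm xs ys"
    using assms(1) fill(1) dominated_step_mset by metis
  obtain bs where "length bs = length ys" "set bs \<subseteq> {0..1}" "sum_list bs = sum_list as"
    "dominated fm (mset (map2 (+) xs as)) (mset (map2 (+) ys bs))"
    using cup_step_fill[OF ys(2) fill(3,4)] .
  moreover have "size Y = size X"
    using ys fill(1) cup_step_length by fastforce
  ultimately show ?thesis
    using fill ys by (metis filler_movesI)
qed

lemma filler_moves_dominated:
  assumes "dominated fm X Y" "(Z, p) \<in> filler_moves pm X"
  shows "\<exists>Z'. (Z', p) \<in> filler_moves pm Y \<and> dominated fm Z Z'"
  using assms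
proof (induction arbitrary: Z rule: rtranclp_induct)
  case (step Y W)
  then obtain Z1 where "(Z1, p) \<in> filler_moves pm Y" "dominated fm Z Z1"
    by blast
  with filler_moves_dominated_step[OF step.hyps(2)] show ?case
    by (meson rtranclp_trans)
qed blast

lemma shift_empty_cups_dominated:
  assumes ij: "i < length xs" "j < length xs" "i \<noteq> j" "xs ! i = a" "xs ! j = c" "dec fm c \<le> a"
    and J: "J \<subseteq> {..<length xs}"
  shows "\<exists>I \<subseteq> {..<length xs}. card I = card J \<and>
           dominated fm (mset (empty_cups fm xs I))
             (mset (empty_cups fm (xs[i := a + 1, j := dec fm c]) J))"
proof -
  define L where "L = empty_cups fm xs J"
  have L: "length L = length xs" "L ! i = (if i \<in> J then dec fm a else a)"
    "L ! j = (if j \<in> J then dec fm c else c)"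
    using ij by (auto simp: L_def nth_empty_cups)
  have target: "empty_cups fm (xs[i := a + 1, j := dec fm c]) J =
      L[i := (if i \<in> J then dec fm (a + 1) else a + 1),
        j := (if j \<in> J then dec fm (dec fm c) else dec fm c)]"
    using ij by (simp add: L_def empty_cups_list_update)
  have "c \<le> a + 1" using dec_ge[of c fm] ij by linarith
  show ?thesis
  proof (cases "i \<in> J \<and> j \<notin> J")
    case True
    \<comment> \<open>Emptying cup j instead of cup i undoes the shift.\<close>
    define I where "I = insert j (J - {i})"
    have "0 < card J"
      using True finite_subset[OF J] card_gt_0_iff by blast
    then have I: "I \<subseteq> {..<length xs}" "card I = card J"
      using J True ij(2) finite_subset[OF J] by (auto simp: I_def card_insert_if)
    have "empty_cups fm xs I = L[i := a, j := dec fm c]"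
      using ij by (intro nth_equalityI) (auto simp: I_def L_def nth_empty_cups nth_list_update)
    moreover have "dominated fm (mset (L[i := a, j := dec fm c]))
                     (mset (L[i := dec fm (a + 1), j := dec fm c]))"
      using ij L le_dec_plus_1[of a fm]
      by (intro dominated_pointwise_le) (auto simp: nth_list_update)
    ultimately show ?thesis using I True by (auto simp: target)
  next
    case False
    have "dominated fm (mset L) (mset (empty_cups fm (xs[i := a + 1, j := dec fm c]) J))"
      unfolding target
    proof (rule dominated_unit_transfer)
      show "dec fm (L ! j) \<le> L ! i" "L ! j \<le> (if i \<in> J then dec fm (a + 1) else a + 1)"
        "L ! i + 1 \<le> (if i \<in> J then dec fm (a + 1) else a + 1) \<or> fm = NonNeg \<and> L ! i = 0"
        using False L ij \<open>c \<le> a + 1\<close> dec_dec_le[of fm c] dec_mono dec_plus_1_le_dec[of fm a]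
        by (auto intro: order_trans)
    qed (use L ij in auto)
    then show ?thesis using J unfolding L_def by blast
  qed
qed

lemma cup_step_empty:
  assumes step: "cup_step fm xs ys" and J: "J \<subseteq> {..<length xs}"
  shows "\<exists>I \<subseteq> {..<length xs}. card I = card J \<and>
           dominated fm (mset (empty_cups fm xs I)) (mset (empty_cups fm ys J))"
  using step
proof cases
  case (raise i v)
  have "dominated fm (mset (empty_cups fm xs J)) (mset (empty_cups fm ys J))"
    using raise by (intro dominated_pointwise_le) (auto simp: nth_empty_cups nth_list_update dec_mono)
  then show ?thesis using J by blast
next
  case (shift i j a c)
  then show ?thesis using shift_empty_cups_dominated[OF _ _ _ _ _ _ J] by simp
qed

lemma emptier_moves_dominated_step:
  assumes "dominated_step fm Z Z'" "Q' \<in> emptier_moves fm Z' p"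
  shows "\<exists>Q \<in> emptier_moves fm Z p. dominated fm Q Q'"
proof -
  obtain xs ys where xs: "Z = mset xs" "Z' = mset ys" "cup_step fm xs ys"
    using assms(1) unfolding dominated_step_def by blast
  obtain J where J: "J \<subseteq> {..<length xs}" "card J = p" "Q' = mset (empty_cups fm ys J)"
    using assms(2) cup_step_length[OF xs(3)] unfolding xs(2) emptier_moves_mset by auto
  show ?thesis
    using cup_step_empty[OF xs(3) J(1)] J unfolding xs(1) emptier_moves_mset by auto
qed

lemma emptier_moves_dominated:
  assumes "dominated fm Z Z'" "Q' \<in> emptier_moves fm Z' p"
  shows "\<exists>Q \<in> emptier_moves fm Z p. dominated fm Q Q'"
  using assms
proof (induction arbitrary: Q' rule: rtranclp_induct)
  case (step Y W)
  obtain Y' where "Y' \<in> emptier_moves fm Y p" "dominated fm Y' Q'"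
    using emptier_moves_dominated_step[OF step.hyps(2) step.prems] by blast
  with step.IH show ?case
    by (meson rtranclp_trans)
qed blast

lemma empty_cups_exchange:
  assumes "r < length xs" "g < length xs" "r \<in> I" "g \<notin> I" "xs ! g \<le> xs ! r"
  shows "dominated fm (mset (empty_cups fm xs I)) (mset (empty_cups fm xs (insert g (I - {r}))))"
proof -
  define L where "L = empty_cups fm xs I"
  have L: "length L = length xs" "L ! r = dec fm (xs ! r)" "L ! g = xs ! g"
    using assms by (auto simp: L_def nth_empty_cups)
  have "empty_cups fm xs (insert g (I - {r})) = L[r := xs ! r, g := dec fm (xs ! g)]"
    using assms by (intro nth_equalityI) (auto simp: L_def nth_empty_cups nth_list_update)
  moreover have "dominated fm (mset L) (mset (L[r := xs ! r, g := dec fm (xs ! g)]))"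
    using assms L dec_mono[OF assms(5)] dec_plus_1_le[of fm "xs ! r"]
    by (intro dominated_unit_transfer) auto
  ultimately show ?thesis by (simp add: L_def)
qed

lemma empty_cups_fullest_dominated:
  assumes T: "T \<subseteq> {..<length xs}"
    and fullest: "\<And>i j. i \<in> T \<Longrightarrow> j < length xs \<Longrightarrow> j \<notin> T \<Longrightarrow> xs ! j \<le> xs ! i"
  shows "I \<subseteq> {..<length xs} \<Longrightarrow> card I = card T \<Longrightarrow>
           dominated fm (mset (empty_cups fm xs T)) (mset (empty_cups fm xs I))"
proof (induction "card (I - T)" arbitrary: I rule: less_induct)
  case less
  have fin: "finite T" "finite I"
    using T less.prems(1) finite_subset by auto
  show ?case
  proof (cases "I \<subseteq> T")
    case True
    then have "I = T" using card_subset_eq[OF fin(1)] less.prems(2) by blast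
    then show ?thesis by simp
  next
    case False
    then obtain g where g: "g \<in> I" "g \<notin> T" by blast
    have "\<not> T \<subseteq> I"
      using card_subset_eq[OF fin(2)] less.prems(2) g by metis
    then obtain r where r: "r \<in> T" "r \<notin> I" by blast
    define I' where "I' = insert r (I - {g})"
    have "0 < card I" using g fin(2) card_gt_0_iff by blast
    then have I': "I' \<subseteq> {..<length xs}" "card I' = card T"
      using less.prems fin(2) g r T by (auto simp: I'_def card_insert_if)
    have "I' - T = (I - T) - {g}" using r by (auto simp: I'_def)
    then have "card (I' - T) < card (I - T)"
      using fin(2) g by (metis DiffI card_Diff1_less finite_Diff)
    then have "dominated fm (mset (empty_cups fm xs T)) (mset (empty_cups fm xs I'))"
      using less.hyps I' by blast
    moreover have "I = insert g (I' - {r})" using g r by (auto simp: I'_def)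
    then have "dominated fm (mset (empty_cups fm xs I')) (mset (empty_cups fm xs I))"
      using empty_cups_exchange[of r xs g I' fm] fullest[of r g] r g T less.prems(1)
      by (auto simp: I'_def)
    ultimately show ?thesis by (rule rtranclp_trans)
  qed
qed

lemma greedy_empty_least:
  assumes "p \<le> size S"
  shows "greedy_empty fm S p \<in> emptier_moves fm S p"
    and "Q \<in> emptier_moves fm S p \<Longrightarrow> dominated fm (greedy_empty fm S p) Q"
proof -
  define xs where "xs = rev (sorted_list_of_multiset S)"
  have xs: "mset xs = S" "length xs = size S" "sorted (rev xs)"
    unfolding xs_def by (auto simp flip: size_mset)
  have greedy: "greedy_empty fm S p = mset (empty_cups fm xs {..<p})"
    unfolding xs_def using assms by (rule greedy_empty_empty_cups)
  have "mset (empty_cups fm xs {..<p}) \<in> emptier_moves fm (mset xs) p"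
    unfolding emptier_moves_mset using assms xs(2) by auto
  then show "greedy_empty fm S p \<in> emptier_moves fm S p"
    using greedy xs(1) by simp
  assume "Q \<in> emptier_moves fm S p"
  then obtain I where I: "I \<subseteq> {..<length xs}" "card I = p" "Q = mset (empty_cups fm xs I)"
    unfolding xs(1)[symmetric] emptier_moves_mset by blast
  have "xs ! j \<le> xs ! i" if "i < p" "j < length xs" "p \<le> j" for i j
    using sorted_rev_nth_mono[OF xs(3)] that by simp
  then show "dominated fm (greedy_empty fm S p) Q"
    unfolding greedy I(3) using assms xs(2) I(1,2)
    by (intro empty_cups_fullest_dominated) auto
qed

section \<open>Game values\<close>

definition emptier_value :: "proc_mode \<Rightarrow> fill_mode \<Rightarrow> state \<Rightarrow> nat \<Rightarrow> nat \<Rightarrow> real" where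
  "emptier_value pm fm Z p t = (INF Q \<in> emptier_moves fm Z p. OPT pm fm Q t)"

lemma OPT_Suc:
  "OPT pm fm S (Suc t) = (SUP m \<in> filler_moves pm S. emptier_value pm fm (fst m) (snd m) t)"
  by (simp add: emptier_value_def)

lemma emptier_value_le:
  "Q \<in> emptier_moves fm Z p \<Longrightarrow> emptier_value pm fm Z p t \<le> OPT pm fm Q t"
  unfolding emptier_value_def by (intro cINF_lower bdd_below_finite finite_imageI emptier_moves_finite)

lemma emptier_value_bound:
  assumes move: "(Z, p) \<in> filler_moves pm S"
    and S: "1 \<le> size S" "procs pm (size S) \<subseteq> {..size S}"
    and OPT_le: "\<And>Q. size Q = size S \<Longrightarrow> OPT pm fm Q t \<le> max 0 (backlog Q) + t"
  shows "emptier_value pm fm Z p t \<le> max 0 (backlog S) + (t + 1)"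
proof -
  have Z: "size Z = size S" "p \<le> size Z"
    using filler_moves_size[OF move] S(2) by auto
  then obtain Q where Q: "Q \<in> emptier_moves fm Z p"
    using emptier_moves_nonempty by blast
  have "S \<noteq> {#}" "Z \<noteq> {#}" using S(1) Z(1) by auto
  then have "max 0 (backlog Q) \<le> max 0 (backlog S) + 1"
    using emptier_moves_backlog[OF Q] filler_moves_backlog[OF move] by auto
  moreover have "emptier_value pm fm Z p t \<le> max 0 (backlog Q) + t"
    using emptier_value_le[OF Q, of pm t] OPT_le[of Q] emptier_moves_size[OF Q] Z(1) by linarith
  ultimately show ?thesis by simp
qed

(* Needed only for the boundedness side conditions of SUP on the reals. *)
lemma OPT_bound:
  assumes "1 \<le> size S" "procs pm (size S) \<subseteq> {..size S}"
  shows "OPT pm fm S t \<le> max 0 (backlog S) + t"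
  using assms
proof (induction t arbitrary: S)
  case (Suc t)
  have "filler_moves pm S \<noteq> {}"
    using Suc.prems procs_nonempty filler_moves_nonempty by fastforce
  then show ?case
    unfolding OPT_Suc using emptier_value_bound[OF _ Suc.prems] Suc.IH Suc.prems
    by (intro cSUP_least) (auto simp: add.commute)
qed simp

lemma emptier_value_mono:
  assumes "dominated fm Z Z'" "p \<le> size Z"
    and OPT_le: "\<And>Q Q'. Q \<in> emptier_moves fm Z p \<Longrightarrow> dominated fm Q Q' \<Longrightarrow>
                   OPT pm fm Q t \<le> OPT pm fm Q' t"
  shows "emptier_value pm fm Z p t \<le> emptier_value pm fm Z' p t"
  unfolding emptier_value_def
proof (rule cINF_mono)
  show "emptier_moves fm Z' p \<noteq> {}"
    using assms(2) dominated_size[OF assms(1)] emptier_moves_nonempty by simp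
  show "bdd_below ((\<lambda>Q. OPT pm fm Q t) ` emptier_moves fm Z p)"
    by (intro bdd_below_finite finite_imageI emptier_moves_finite)
  fix Q' assume "Q' \<in> emptier_moves fm Z' p"
  then show "\<exists>Q \<in> emptier_moves fm Z p. OPT pm fm Q t \<le> OPT pm fm Q' t"
    using emptier_moves_dominated[OF assms(1)] OPT_le by blast
qed

lemma OPT_mono:
  assumes "dominated fm X Y" "1 \<le> size X" "procs pm (size X) \<subseteq> {..size X}"
  shows "OPT pm fm X t \<le> OPT pm fm Y t"
  using assms
proof (induction t arbitrary: X Y)
  case 0
  then show ?case by (simp add: dominated_backlog)
next
  case (Suc t)
  have Y: "size Y = size X" using dominated_size[OF Suc.prems(1)] .
  show ?case
    unfolding OPT_Suc
  proof (rule cSUP_mono)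
    show "filler_moves pm X \<noteq> {}"
      using Suc.prems procs_nonempty filler_moves_nonempty by fastforce
    show "bdd_above ((\<lambda>m. emptier_value pm fm (fst m) (snd m) t) ` filler_moves pm Y)"
      using emptier_value_bound[of _ _ pm Y fm t] OPT_bound[of _ pm fm t] Suc.prems Y
      by (intro bdd_aboveI2) auto
  next
    fix m assume m: "m \<in> filler_moves pm X"
    obtain Z p where Z: "m = (Z, p)" by fastforce
    obtain Z' where Z': "(Z', p) \<in> filler_moves pm Y" "dominated fm Z Z'"
      using filler_moves_dominated[OF Suc.prems(1)] m Z by blast
    have "size Z = size X" "p \<le> size Z"
      using filler_moves_size[of Z p pm X] m Z Suc.prems(3) by auto
    then have "emptier_value pm fm Z p t \<le> emptier_value pm fm Z' p t"
      using Suc.IH Suc.prems(2,3) emptier_moves_size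
      by (intro emptier_value_mono[OF Z'(2)]) auto
    then show "\<exists>m' \<in> filler_moves pm Y. emptier_value pm fm (fst m) (snd m) t
        \<le> emptier_value pm fm (fst m') (snd m') t"
      using Z Z'(1) by force
  qed
qed

lemma emptier_value_greedy:
  assumes "p \<le> size Z" "1 \<le> size Z" "procs pm (size Z) \<subseteq> {..size Z}"
  shows "emptier_value pm fm Z p t = OPT pm fm (greedy_empty fm Z p) t"
proof (rule antisym)
  show "emptier_value pm fm Z p t \<le> OPT pm fm (greedy_empty fm Z p) t"
    using greedy_empty_least(1)[OF assms(1)] by (rule emptier_value_le)
  have "size (greedy_empty fm Z p) = size Z"
    using greedy_empty_least(1)[OF assms(1)] by (rule emptier_moves_size)
  then show "OPT pm fm (greedy_empty fm Z p) t \<le> emptier_value pm fm Z p t"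
    unfolding emptier_value_def using assms emptier_moves_nonempty greedy_empty_least(2)
    by (intro cINF_greatest OPT_mono) auto
qed

lemma GREEDY_eq_OPT:
  assumes "1 \<le> size A" "procs pm (size A) \<subseteq> {..size A}"
  shows "GREEDY pm fm A t = OPT pm fm A t"
  using assms
proof (induction t arbitrary: A)
  case (Suc t)
  have "GREEDY pm fm (greedy_empty fm Z p) t = emptier_value pm fm Z p t"
    if "(Z, p) \<in> filler_moves pm A" for Z p
  proof -
    have Z: "size Z = size A" "p \<le> size Z"
      using filler_moves_size[OF that] Suc.prems(2) by auto
    moreover have "size (greedy_empty fm Z p) = size Z"
      using greedy_empty_least(1)[OF Z(2)] by (rule emptier_moves_size)
    ultimately show ?thesis
      using Suc emptier_value_greedy[of p Z pm fm t] by simp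
  qed
  then show ?case
    unfolding OPT_Suc GREEDY.simps by (intro SUP_cong) auto
qed simp

theorem theorem4p4:
  fixes pm :: proc_mode and fm :: fill_mode and A :: state and n t :: nat
  assumes "size A = n" and "n \<ge> 1"
    and "\<And>p. pm = Fixed p \<Longrightarrow> 1 \<le> p \<and> p \<le> n"
    and "fm = NonNeg \<Longrightarrow> (\<forall>x \<in># A. x \<ge> 0)"
  shows "GREEDY pm fm A t = OPT pm fm A t"
proof -
  have "procs pm n \<subseteq> {..n}"
    using assms(3) by (cases pm) auto
  then show ?thesis
    using GREEDY_eq_OPT assms(1,2) by blast
qed

end
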